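(* Fix $j\in\{1,\dots,p\}$. Along the Lasso path defined below, the functions $\lambda\mapsto\|z_j(\lambda)\|_2$, $\lambda\mapsto\eta_j(\lambda)$ and $\lambda\mapsto\hat\sigma_j(\lambda)$ are nondecreasing on $(0,\infty)$, and $\tau_j(\lambda)\le 1/\|z_j(\lambda)\|_2$ for every $\lambda>0$. Moreover, if $\hat\gamma_j(\lambda)\neq 0$, then $\eta_j(\lambda)=\lambda n/\|z_j(\lambda)\|_2$.
   Context: $X=(x_1,\dots,x_p)\in\mathbb{R}^{n\times p}$ is a deterministic matrix with columns normalized so that $\|x_j\|_2^2=n$ for all $j$; $X_{-j}$ denotes the $n\times(p-1)$ matrix with columns $x_k$, $k\neq j$. For $\lambda>0$ let $\hat\gamma_j(\lambda)\in\arg\min_{b\in\mathbb{R}^{p-1}}\{\|x_j-X_{-j}b\|_2^2/(2n)+\lambda\|b\|_1\}$ (a Lasso solution; the residual below does not depend on which solution is chosen), $z_j(\lambda)=x_j-X_{-j}\hat\gamma_j(\lambda)$, $\eta_j(\lambda)=\max_{k\neq j}|x_k^Tz_j(\lambda)|/\|z_j(\lambda)\|_2$, $\tau_j(\lambda)=\|z_j(\lambda)\|_2/|x_j^Tz_j(\lambda)|$. Also let $\hat\sigma_j(\lambda)$ be the $\sigma$-component of the minimizer over $(b,\sigma)$, $\sigma\ge 0$, of $\|x_j-X_{-j}b\|_2^2/(2n\sigma)+\sigma/2+\lambda\|b\|_1$ (the scaled Lasso noise-level estimate for regressing $x_j$ on $X_{-j}$). *)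

theory Defs
  imports "HOL-Analysis.Analysis"
begin

text \<open>Coefficient vectors in R^(p-1) (indexed by k ~= j) are represented as
  functions b :: 'p => real with b j = 0.\<close>

definition Xmj :: "real^'p^'n \<Rightarrow> 'p \<Rightarrow> ('p \<Rightarrow> real) \<Rightarrow> real^'n" where
  "Xmj X j b = (\<Sum>k\<in>-{j}. b k *\<^sub>R column k X)"

definition l1mj :: "'p::finite \<Rightarrow> ('p \<Rightarrow> real) \<Rightarrow> real" where
  "l1mj j b = (\<Sum>k\<in>-{j}. \<bar>b k\<bar>)"

definition lasso_obj :: "real^'p^'n \<Rightarrow> 'p \<Rightarrow> real \<Rightarrow> ('p \<Rightarrow> real) \<Rightarrow> real" where
  "lasso_obj X j lam b =
     (norm (column j X - Xmj X j b))^2 / (2 * real CARD('n)) + lam * l1mj j b"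

definition is_lasso_sol :: "real^'p^'n \<Rightarrow> 'p \<Rightarrow> real \<Rightarrow> ('p \<Rightarrow> real) \<Rightarrow> bool" where
  "is_lasso_sol X j lam b \<longleftrightarrow>
     b j = 0 \<and> (\<forall>b'. b' j = 0 \<longrightarrow> lasso_obj X j lam b \<le> lasso_obj X j lam b')"

definition gamma_hat :: "real^'p^'n \<Rightarrow> 'p \<Rightarrow> real \<Rightarrow> ('p \<Rightarrow> real)" where
  "gamma_hat X j lam = (SOME b. is_lasso_sol X j lam b)"

definition zres :: "real^'p^'n \<Rightarrow> 'p \<Rightarrow> real \<Rightarrow> real^'n" where
  "zres X j lam = column j X - Xmj X j (gamma_hat X j lam)"

text \<open>eta_j(lambda) = max_{k ~= j} |x_k^T z_j| / ||z_j||; the 0 inserted only serves as the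
  value for the empty maximum (p = 1), all terms being nonnegative.\<close>
definition eta :: "real^'p^'n \<Rightarrow> 'p \<Rightarrow> real \<Rightarrow> real" where
  "eta X j lam = Max (insert 0 ((\<lambda>k. \<bar>column k X \<bullet> zres X j lam\<bar> / norm (zres X j lam)) ` (-{j})))"

definition tau :: "real^'p^'n \<Rightarrow> 'p \<Rightarrow> real \<Rightarrow> real" where
  "tau X j lam = norm (zres X j lam) / \<bar>column j X \<bullet> zres X j lam\<bar>"

text \<open>Scaled Lasso objective, jointly in (b, sigma), sigma >= 0. At sigma = 0 the objective
  is the lower semicontinuous extension: +infinity if the residual is nonzero (such points
  are excluded from the feasible set), and lambda ||b||_1 if the residual is zero (which is
  what the formula gives with Isabelle's convention 0/0 = 0).\<close>
definition scaled_obj :: "real^'p^'n \<Rightarrow> 'p \<Rightarrow> real \<Rightarrow> ('p \<Rightarrow> real) \<Rightarrow> real \<Rightarrow> real" where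
  "scaled_obj X j lam b \<sigma> =
     (norm (column j X - Xmj X j b))^2 / (2 * real CARD('n) * \<sigma>) + \<sigma> / 2 + lam * l1mj j b"

definition scaled_feasible :: "real^'p^'n \<Rightarrow> 'p \<Rightarrow> ('p \<Rightarrow> real) \<Rightarrow> real \<Rightarrow> bool" where
  "scaled_feasible X j b \<sigma> \<longleftrightarrow>
     b j = 0 \<and> (\<sigma> > 0 \<or> (\<sigma> = 0 \<and> column j X - Xmj X j b = 0))"

definition is_scaled_sol :: "real^'p^'n \<Rightarrow> 'p \<Rightarrow> real \<Rightarrow> ('p \<Rightarrow> real) \<Rightarrow> real \<Rightarrow> bool" where
  "is_scaled_sol X j lam b \<sigma> \<longleftrightarrow> scaled_feasible X j b \<sigma> \<and>
     (\<forall>b' \<sigma>'. scaled_feasible X j b' \<sigma>' \<longrightarrow> scaled_obj X j lam b \<sigma> \<le> scaled_obj X j lam b' \<sigma>')"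

definition sigma_hat :: "real^'p^'n \<Rightarrow> 'p \<Rightarrow> real \<Rightarrow> real" where
  "sigma_hat X j lam = snd (SOME q. is_scaled_sol X j lam (fst q) (snd q))"

end

theory Submission
  imports Defs
begin

text \<open>
  The proof rests on Lasso duality.  The two optimality (KKT) conditions of the Lasso, obtained
  by one-dimensional perturbations of a minimizer, say that the residual \<open>z\<^sub>j(lam)\<close> is the
  Euclidean projection of \<open>x\<^sub>j\<close> onto the polytope \<open>C(lam) = {u. \<forall>k \<noteq> j. \<bar>x\<^sub>k\<^sup>T u\<bar> \<le> n lam}\<close>.
  Since \<open>C(lam) = lam \<cdot> C(1)\<close>, a general fact about projections onto dilates shows that
  \<open>lam / \<parallel>z\<^sub>j(lam)\<parallel>\<close> is nondecreasing.  When the solution is nonzero some constraint of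
  \<open>C(lam)\<close> is active, so \<open>eta\<^sub>j(lam) = n lam / \<parallel>z\<^sub>j(lam)\<parallel>\<close>; when it is zero, \<open>z\<^sub>j = x\<^sub>j\<close> and
  \<open>eta\<^sub>j\<close> is constant.  Monotonicity of \<open>\<parallel>z\<^sub>j\<parallel>\<close> and of \<open>sigma\<^sub>j\<close> follows from the exchange
  argument for penalized minimizers, after identifying the scaled Lasso with the square-root
  Lasso, and the bound on \<open>tau\<^sub>j\<close> follows from the second KKT condition.
\<close>

lemma continuous_attains_inf_sublevel:
  fixes f :: "'a::heine_borel \<Rightarrow> real"
  assumes cont: "continuous_on UNIV f" and S: "closed S" "a \<in> S"
    and bd: "bounded {v \<in> S. f v \<le> f a}"
  shows "\<exists>v\<in>S. \<forall>w\<in>S. f v \<le> f w"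
proof -
  define K where "K = {v \<in> S. f v \<le> f a}"
  have "K = S \<inter> {v. f v \<le> f a}" unfolding K_def by blast
  then have "closed K" using S(1) cont by (simp add: closed_Int closed_Collect_le)
  then have "compact K" using bd unfolding K_def by (simp add: compact_eq_bounded_closed)
  moreover have "a \<in> K" using S(2) unfolding K_def by simp
  ultimately obtain v where v: "v \<in> K" "\<forall>w\<in>K. f v \<le> f w"
    using continuous_attains_inf[of K f] continuous_on_subset[OF cont] by blast
  have "f v \<le> f w" if "w \<in> S" for w
    using v \<open>a \<in> K\<close> that unfolding K_def by (cases "f w \<le> f a") force+
  then show ?thesis using v(1) unfolding K_def by blast
qed

text \<open>Variational characterisation of the Euclidean projection of \<open>a\<close> onto \<open>C\<close>:
  \<open>p \<in> C\<close> and \<open>a - p\<close> makes an obtuse angle with every direction into \<open>C\<close>.\<close>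
definition is_proj :: "'v::real_inner set \<Rightarrow> 'v \<Rightarrow> 'v \<Rightarrow> bool" where
  "is_proj C a p \<longleftrightarrow> p \<in> C \<and> (\<forall>u\<in>C. (a - p) \<bullet> (u - p) \<le> 0)"

lemma is_proj_self: "a \<in> C \<Longrightarrow> is_proj C a a"
  unfolding is_proj_def by simp

lemma is_proj_of_member:
  assumes "is_proj C a p" "a \<in> C"
  shows "p = a"
proof -
  have "(a - p) \<bullet> (a - p) \<le> 0" using assms unfolding is_proj_def by blast
  then show ?thesis by (metis eq_iff_diff_eq_0 inner_eq_zero_iff inner_ge_zero order_antisym)
qed

lemma is_proj_scale:
  assumes "is_proj C a p" "c > 0"
  shows "is_proj ((*\<^sub>R) c ` C) (c *\<^sub>R a) (c *\<^sub>R p)"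
  unfolding is_proj_def
proof (intro conjI ballI)
  show "c *\<^sub>R p \<in> (*\<^sub>R) c ` C" using assms(1) unfolding is_proj_def by blast
  fix v assume "v \<in> (*\<^sub>R) c ` C"
  then obtain u where u: "u \<in> C" "v = c *\<^sub>R u" by blast
  have "(c *\<^sub>R a - c *\<^sub>R p) \<bullet> (v - c *\<^sub>R p) = c\<^sup>2 * ((a - p) \<bullet> (u - p))"
    unfolding u(2) by (simp add: power2_eq_square flip: scaleR_diff_right)
  also have "\<dots> \<le> 0" using assms(1) u(1) unfolding is_proj_def by (simp add: mult_nonneg_nonpos)
  finally show "(c *\<^sub>R a - c *\<^sub>R p) \<bullet> (v - c *\<^sub>R p) \<le> 0" .
qed

lemma is_proj_ray_norm_mono:
  assumes p: "is_proj C (s *\<^sub>R b) p" and q: "is_proj C b q" and s: "s > 1"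
  shows "norm q \<le> norm p"
proof -
  have h1: "(s *\<^sub>R b - p) \<bullet> (p - q) \<ge> 0"
    using p q unfolding is_proj_def by (metis inner_minus_right minus_diff_eq neg_0_le_iff_le)
  have h2: "(b - q) \<bullet> (p - q) \<le> 0" using p q unfolding is_proj_def by blast
  have "(s - 1) * (b \<bullet> (p - q)) = (s *\<^sub>R b - p) \<bullet> (p - q) - (b - q) \<bullet> (p - q) + (p - q) \<bullet> (p - q)"
    by (simp add: inner_diff_left algebra_simps)
  also have "\<dots> \<ge> 0" using h1 h2 by simp
  finally have "b \<bullet> (p - q) \<ge> 0" using s by (simp add: zero_le_mult_iff)
  then have "q \<bullet> q \<le> q \<bullet> p" using h2 by (simp add: inner_diff_left inner_diff_right)
  also have "\<dots> \<le> norm q * norm p" by (rule norm_cauchy_schwarz)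
  finally have "norm q * norm q \<le> norm q * norm p" by (simp flip: power2_norm_eq_inner power2_eq_square)
  then show ?thesis by (cases "norm q = 0") auto
qed

text \<open>Rescale by \<open>1 / l\<close> and apply the ray lemma.\<close>
lemma is_proj_dilation_norm_mono:
  assumes p1: "is_proj ((*\<^sub>R) l1 ` C) a p1" and p2: "is_proj ((*\<^sub>R) l2 ` C) a p2"
    and l: "0 < l1" "l1 < l2"
  shows "l1 * norm p2 \<le> l2 * norm p1"
proof -
  have rescaled: "is_proj C (inverse l *\<^sub>R a) (inverse l *\<^sub>R p)"
    if "is_proj ((*\<^sub>R) l ` C) a p" "l > 0" for l p
    using is_proj_scale[OF that(1), of "inverse l"] that(2) by (simp add: image_image)
  have ray: "inverse l1 *\<^sub>R a = (l2 / l1) *\<^sub>R (inverse l2 *\<^sub>R a)" using l by (simp add: field_simps)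
  have "is_proj C ((l2 / l1) *\<^sub>R (inverse l2 *\<^sub>R a)) (inverse l1 *\<^sub>R p1)"
    using rescaled[OF p1 l(1)] unfolding ray .
  from is_proj_ray_norm_mono[OF this rescaled[OF p2]]
  have "norm (inverse l2 *\<^sub>R p2) \<le> norm (inverse l1 *\<^sub>R p1)" using l by simp
  then show ?thesis using l by (simp add: field_simps)
qed

text \<open>If \<open>c t \<le> a t\<^sup>2 + m \<bar>t\<bar>\<close> for all \<open>t\<close>, then \<open>\<bar>c\<bar> \<le> m\<close>: the subgradient condition
  for a one-dimensional perturbation through a kink.\<close>
lemma linear_term_bound:
  fixes a c m :: real
  assumes a: "a \<ge> 0" and H: "\<And>t. c * t \<le> a * t\<^sup>2 + m * \<bar>t\<bar>"
  shows "\<bar>c\<bar> \<le> m"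
proof (rule ccontr)
  assume "\<not> \<bar>c\<bar> \<le> m"
  define e where "e = (\<bar>c\<bar> - m) / (a + 1)"
  have e: "e > 0" and ae: "a * e < \<bar>c\<bar> - m"
    using \<open>\<not> \<bar>c\<bar> \<le> m\<close> a unfolding e_def by (auto simp: field_simps)
  have "\<bar>c\<bar> * e \<le> a * e\<^sup>2 + m * e"
    using H[of e] H[of "- e"] e by (cases "c \<ge> 0") auto
  then have "e * \<bar>c\<bar> \<le> e * (m + a * e)" by (simp add: power2_eq_square algebra_simps)
  then have "\<bar>c\<bar> - m \<le> a * e" using e by simp
  then show False using ae by linarith
qed

lemma linear_term_vanishes:
  fixes c d :: real
  assumes H: "\<And>t. \<bar>t\<bar> < 1 \<Longrightarrow> 0 \<le> c * t + d * t\<^sup>2"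
  shows "c = 0"
proof (rule DERIV_local_min[where f = "\<lambda>t. c * t + d * t\<^sup>2" and x = 0 and d = 1])
  show "DERIV (\<lambda>t. c * t + d * t\<^sup>2) 0 :> c"
    by (auto intro!: derivative_eq_intros)
qed (use H in auto)

text \<open>Exchange argument for penalized minimization: if the first point is optimal for penalty
  level \<open>l1\<close> and the second for \<open>l2 > l1\<close>, the first has the smaller loss.\<close>
lemma penalty_exchange:
  fixes a1 a2 L1 L2 l1 l2 :: real
  assumes "a1 + l1 * L1 \<le> a2 + l1 * L2" "a2 + l2 * L2 \<le> a1 + l2 * L1" "0 \<le> l1" "l1 < l2"
  shows "a1 \<le> a2"
proof -
  have "(l2 - l1) * (L2 - L1) \<le> 0" using assms(1,2) by (simp add: algebra_simps)
  then have "L2 \<le> L1" using assms(4) by (simp add: mult_le_0_iff)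
  then have "l1 * L2 \<le> l1 * L1" using assms(3) by (simp add: mult_left_mono)
  then show ?thesis using assms(1) by linarith
qed

text \<open>Profiling out the noise level: \<open>r\<^sup>2/(2s) + s/2\<close> exceeds \<open>r\<close> by a square.\<close>
lemma am_gm_gap:
  fixes r s :: real
  assumes "s > 0"
  shows "r\<^sup>2 / (2 * s) + s / 2 = r + (s - r)\<^sup>2 / (2 * s)"
  using assms by (simp add: field_simps power2_eq_square)

definition residual :: "real^'p^'n \<Rightarrow> 'p \<Rightarrow> ('p \<Rightarrow> real) \<Rightarrow> real^'n" where
  "residual X j b = column j X - Xmj X j b"

lemma zres_eq_residual: "zres X j lam = residual X j (gamma_hat X j lam)"
  unfolding zres_def residual_def ..

lemma lasso_obj_residual:
  fixes X :: "real^'p^'n"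
  shows "lasso_obj X j lam b = (norm (residual X j b))\<^sup>2 / (2 * real CARD('n)) + lam * l1mj j b"
  unfolding lasso_obj_def residual_def ..

lemma Xmj_shift:
  "Xmj X j (\<lambda>i. b i + t * d i) = Xmj X j b + t *\<^sub>R Xmj X j d"
  unfolding Xmj_def by (simp add: scaleR_add_left sum.distrib scaleR_sum_right)

lemma Xmj_zero: "Xmj X j (\<lambda>_. 0) = 0"
  unfolding Xmj_def by simp

lemma Xmj_unit:
  fixes X :: "real^'p::finite^'n"
  assumes "k \<noteq> j"
  shows "Xmj X j (\<lambda>i. if i = k then 1 else 0) = column k X"
  using assms unfolding Xmj_def by (simp add: if_distrib[of "\<lambda>c. c *\<^sub>R _"] cong: if_cong)

lemma Xmj_inner:
  fixes X :: "real^'p::finite^'n"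
  shows "Xmj X j b \<bullet> u = (\<Sum>k\<in>-{j}. b k * (column k X \<bullet> u))"
  unfolding Xmj_def by (simp add: inner_sum_left)

lemma l1mj_nonneg: "l1mj j b \<ge> 0"
  unfolding l1mj_def by (simp add: sum_nonneg)

lemma l1mj_eq_0_iff:
  fixes j :: "'p::finite"
  assumes "b j = 0"
  shows "l1mj j b = 0 \<longleftrightarrow> b = (\<lambda>_. 0)"
proof
  assume "l1mj j b = 0"
  then have "\<forall>k\<in>-{j}. b k = 0" unfolding l1mj_def by (subst (asm) sum_nonneg_eq_0_iff) auto
  then show "b = (\<lambda>_. 0)" using assms by (metis ComplI singletonD)
qed (simp add: l1mj_def)

lemma residual_shift:
  "residual X j (\<lambda>i. b i + t * d i) = residual X j b - t *\<^sub>R Xmj X j d"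
  unfolding residual_def Xmj_shift by simp

lemma exists_penalized_minimizer:
  fixes F :: "('p::finite \<Rightarrow> real) \<Rightarrow> real" and j :: 'p
  assumes cont: "continuous_on UNIV (\<lambda>v::real^'p. F (($) v))" and lam: "lam > 0"
    and coercive: "\<And>b. lam * l1mj j b \<le> F b"
  shows "\<exists>b. b j = 0 \<and> (\<forall>b'. b' j = 0 \<longrightarrow> F b \<le> F b')"
proof -
  define S where "S = {v::real^'p. v $ j = 0}"
  have "closed S" unfolding S_def by (intro closed_Collect_eq continuous_intros)
  have "norm v \<le> F (($) 0) / lam" if "v \<in> S" "F (($) v) \<le> F (($) 0)" for v
  proof -
    have "(\<Sum>i\<in>UNIV. \<bar>v $ i\<bar>) = \<bar>v $ j\<bar> + l1mj j (($) v)"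
      unfolding l1mj_def Compl_eq_Diff_UNIV by (simp add: sum.remove)
    then have "norm v \<le> l1mj j (($) v)" using norm_le_l1_cart[of v] that(1) unfolding S_def by simp
    also have "\<dots> \<le> F (($) 0) / lam" using coercive[of "($) v"] that(2) lam
      by (simp add: field_simps)
    finally show ?thesis .
  qed
  then have "bounded {v \<in> S. F (($) v) \<le> F (($) 0)}" unfolding bounded_iff by blast
  moreover have "0 \<in> S" unfolding S_def by simp
  ultimately obtain v where v: "v \<in> S" "\<forall>w\<in>S. F (($) v) \<le> F (($) w)"
    using continuous_attains_inf_sublevel[OF cont \<open>closed S\<close>] by blast
  have "F (($) v) \<le> F b'" if "b' j = 0" for b'
  proof -
    have "($) (vec_lambda b') = b'" by (rule ext) simp
    then show ?thesis using v(2)[rule_format, of "vec_lambda b'"] that unfolding S_def by simp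
  qed
  then show ?thesis using v(1) unfolding S_def by blast
qed

lemma gamma_hat_is_lasso_sol:
  fixes X :: "real^'p::finite^'n"
  assumes lam: "lam > 0"
  shows "is_lasso_sol X j lam (gamma_hat X j lam)"
proof -
  have "continuous_on UNIV (\<lambda>v::real^'p. lasso_obj X j lam (($) v))"
    unfolding lasso_obj_def Xmj_def l1mj_def by (intro continuous_intros) auto
  moreover have "lam * l1mj j b \<le> lasso_obj X j lam b" for b
    unfolding lasso_obj_def by simp
  ultimately have "\<exists>b. is_lasso_sol X j lam b"
    using exists_penalized_minimizer[OF _ lam] unfolding is_lasso_sol_def by blast
  then show ?thesis unfolding gamma_hat_def by (rule someI_ex)
qed

lemma lasso_first_order:
  fixes X :: "real^'p::finite^'n"
  assumes sol: "is_lasso_sol X j lam b" and d: "d j = 0"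
  shows "t * (Xmj X j d \<bullet> residual X j b)
    \<le> t\<^sup>2 / 2 * (norm (Xmj X j d))\<^sup>2 + real CARD('n) * lam * (l1mj j (\<lambda>i. b i + t * d i) - l1mj j b)"
proof -
  define n where "n = real CARD('n)"
  define r where "r = residual X j b"
  define v where "v = Xmj X j d"
  have n: "n > 0" unfolding n_def by simp
  have "lasso_obj X j lam b \<le> lasso_obj X j lam (\<lambda>i. b i + t * d i)"
    using sol d unfolding is_lasso_sol_def by simp
  moreover have "(norm (r - t *\<^sub>R v))\<^sup>2 = (norm r)\<^sup>2 - 2 * t * (v \<bullet> r) + t\<^sup>2 * (norm v)\<^sup>2"
    unfolding power2_norm_eq_inner
    by (simp add: inner_diff_left inner_diff_right inner_commute algebra_simps power2_eq_square)
  ultimately have "(norm r)\<^sup>2 / (2 * n) + lam * l1mj j b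
      \<le> ((norm r)\<^sup>2 - 2 * t * (v \<bullet> r) + t\<^sup>2 * (norm v)\<^sup>2) / (2 * n) + lam * l1mj j (\<lambda>i. b i + t * d i)"
    unfolding lasso_obj_residual residual_shift r_def v_def n_def by simp
  then have "0 \<le> (- 2 * t * (v \<bullet> r) + t\<^sup>2 * (norm v)\<^sup>2) / (2 * n)
      + lam * (l1mj j (\<lambda>i. b i + t * d i) - l1mj j b)"
    by (simp add: add_divide_distrib diff_divide_distrib algebra_simps)
  then have "0 \<le> n * ((- 2 * t * (v \<bullet> r) + t\<^sup>2 * (norm v)\<^sup>2) / (2 * n)
      + lam * (l1mj j (\<lambda>i. b i + t * d i) - l1mj j b))"
    using n by simp
  also have "\<dots> = t\<^sup>2 / 2 * (norm v)\<^sup>2 + n * lam * (l1mj j (\<lambda>i. b i + t * d i) - l1mj j b)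
      - t * (v \<bullet> r)"
    using n by (simp add: field_simps)
  finally show ?thesis unfolding r_def v_def n_def by simp
qed

text \<open>First KKT condition (perturb one coordinate): every other column has correlation
  at most \<open>n lam\<close> with the residual.\<close>
lemma lasso_correlation_bound:
  fixes X :: "real^'p::finite^'n"
  assumes sol: "is_lasso_sol X j lam b" and lam: "lam \<ge> 0" and k: "k \<noteq> j"
  shows "\<bar>column k X \<bullet> residual X j b\<bar> \<le> real CARD('n) * lam"
proof (rule linear_term_bound)
  define e where "e = (\<lambda>i::'p. if i = k then 1 else (0::real))"
  fix t :: real
  have "l1mj j (\<lambda>i. b i + t * e i) \<le> (\<Sum>i\<in>-{j}. \<bar>b i\<bar> + \<bar>t * e i\<bar>)"
    unfolding l1mj_def by (intro sum_mono abs_triangle_ineq)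
  also have "\<dots> = l1mj j b + \<bar>t\<bar>"
    using k unfolding l1mj_def sum.distrib e_def by (simp add: if_distrib cong: if_cong)
  finally have "real CARD('n) * lam * (l1mj j (\<lambda>i. b i + t * e i) - l1mj j b)
      \<le> real CARD('n) * lam * \<bar>t\<bar>"
    using lam by (intro mult_left_mono) auto
  moreover have "e j = 0" using k unfolding e_def by simp
  note lasso_first_order[where d = e, OF sol this, of t]
  ultimately show "(column k X \<bullet> residual X j b) * t
      \<le> (norm (column k X))\<^sup>2 / 2 * t\<^sup>2 + real CARD('n) * lam * \<bar>t\<bar>"
    unfolding e_def Xmj_unit[OF k] by (simp add: mult.commute)
qed simp

text \<open>Second KKT condition (rescale \<open>b\<close>): the fitted part and the residual have inner
  product \<open>n lam \<parallel>b\<parallel>\<^sub>1\<close>.\<close>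
lemma lasso_fit_identity:
  fixes X :: "real^'p::finite^'n"
  assumes sol: "is_lasso_sol X j lam b"
  shows "Xmj X j b \<bullet> residual X j b = real CARD('n) * lam * l1mj j b"
proof -
  have "0 \<le> (real CARD('n) * lam * l1mj j b - Xmj X j b \<bullet> residual X j b) * t
      + (norm (Xmj X j b))\<^sup>2 / 2 * t\<^sup>2" if "\<bar>t\<bar> < 1" for t
  proof -
    have "\<bar>b i + t * b i\<bar> = (1 + t) * \<bar>b i\<bar>" for i
      using that by (simp add: abs_mult flip: distrib_right[of 1 t, simplified])
    then have "l1mj j (\<lambda>i. b i + t * b i) - l1mj j b = t * l1mj j b"
      unfolding l1mj_def by (simp add: sum_distrib_left sum.distrib algebra_simps)
    moreover have "b j = 0" using sol unfolding is_lasso_sol_def by simp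
    note lasso_first_order[where d = b, OF sol this, of t]
    ultimately show ?thesis by (simp add: algebra_simps)
  qed
  then have "real CARD('n) * lam * l1mj j b - Xmj X j b \<bullet> residual X j b = 0"
    by (rule linear_term_vanishes)
  then show ?thesis by simp
qed

definition dual_set :: "real^'p^'n \<Rightarrow> 'p \<Rightarrow> real \<Rightarrow> (real^'n) set" where
  "dual_set X j lam = {u. \<forall>k. k \<noteq> j \<longrightarrow> \<bar>column k X \<bullet> u\<bar> \<le> real CARD('n) * lam}"

lemma dual_set_dilation:
  assumes c: "c > 0"
  shows "dual_set X j (c * lam) = (*\<^sub>R) c ` dual_set X j lam"
proof -
  have "u \<in> dual_set X j (c * lam) \<longleftrightarrow> inverse c *\<^sub>R u \<in> dual_set X j lam" for u
    using c unfolding dual_set_def by (simp add: abs_mult field_simps)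
  then show ?thesis using c by (force simp: image_iff)
qed

text \<open>Duality: the Lasso residual is the projection of \<open>x\<^sub>j\<close> onto the dual polytope.
  This is why the residual does not depend on the chosen solution.\<close>
lemma lasso_residual_is_proj:
  fixes X :: "real^'p::finite^'n"
  assumes sol: "is_lasso_sol X j lam b" and lam: "lam \<ge> 0"
  shows "is_proj (dual_set X j lam) (column j X) (residual X j b)"
  unfolding is_proj_def
proof (intro conjI ballI)
  show "residual X j b \<in> dual_set X j lam"
    unfolding dual_set_def using lasso_correlation_bound[OF sol lam] by blast
  fix u assume u: "u \<in> dual_set X j lam"
  have "b k * (column k X \<bullet> u) \<le> \<bar>b k\<bar> * (real CARD('n) * lam)" if "k \<in> -{j}" for k
  proof -
    have "b k * (column k X \<bullet> u) \<le> \<bar>b k\<bar> * \<bar>column k X \<bullet> u\<bar>" by (metis abs_ge_self abs_mult)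
    also have "\<dots> \<le> \<bar>b k\<bar> * (real CARD('n) * lam)"
      using u that unfolding dual_set_def by (intro mult_left_mono) auto
    finally show ?thesis .
  qed
  then have "Xmj X j b \<bullet> u \<le> real CARD('n) * lam * l1mj j b"
    unfolding Xmj_inner l1mj_def by (auto intro!: sum_mono simp: sum_distrib_left mult.commute)
  moreover have "column j X - residual X j b = Xmj X j b" unfolding residual_def by simp
  ultimately show "(column j X - residual X j b) \<bullet> (u - residual X j b) \<le> 0"
    using lasso_fit_identity[OF sol] by (simp add: inner_diff_right)
qed

lemma zres_is_proj:
  fixes X :: "real^'p::finite^'n"
  assumes "lam > 0"
  shows "is_proj (dual_set X j lam) (column j X) (zres X j lam)"
  using lasso_residual_is_proj[OF gamma_hat_is_lasso_sol] assms unfolding zres_eq_residual by simp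

lemma gamma_hat_zero_iff:
  fixes X :: "real^'p::finite^'n"
  assumes lam: "lam > 0"
  shows "gamma_hat X j lam = (\<lambda>_. 0) \<longleftrightarrow> column j X \<in> dual_set X j lam"
proof
  assume "gamma_hat X j lam = (\<lambda>_. 0)"
  then have "zres X j lam = column j X" unfolding zres_def by (simp add: Xmj_zero)
  then show "column j X \<in> dual_set X j lam" using zres_is_proj[OF lam] unfolding is_proj_def by metis
next
  assume "column j X \<in> dual_set X j lam"
  then have "zres X j lam = column j X" using is_proj_of_member[OF zres_is_proj[OF lam]] by blast
  then have "Xmj X j (gamma_hat X j lam) = 0" unfolding zres_def by simp
  then have "l1mj j (gamma_hat X j lam) = 0"
    using lasso_fit_identity[OF gamma_hat_is_lasso_sol[OF lam, of X j]] lam by simp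
  then show "gamma_hat X j lam = (\<lambda>_. 0)"
    using l1mj_eq_0_iff gamma_hat_is_lasso_sol[OF lam] unfolding is_lasso_sol_def by blast
qed

lemma zres_nonzero:
  fixes X :: "real^'p::finite^'n"
  assumes lam: "lam > 0" and x: "column j X \<noteq> 0"
  shows "zres X j lam \<noteq> 0"
proof
  assume z: "zres X j lam = 0"
  moreover have "Xmj X j (gamma_hat X j lam) \<bullet> zres X j lam
      = real CARD('n) * lam * l1mj j (gamma_hat X j lam)"
    using lasso_fit_identity[OF gamma_hat_is_lasso_sol[OF lam, of X j]]
    unfolding zres_eq_residual .
  ultimately have "l1mj j (gamma_hat X j lam) = 0" using lam by simp
  then have "gamma_hat X j lam = (\<lambda>_. 0)"
    using l1mj_eq_0_iff gamma_hat_is_lasso_sol[OF lam] unfolding is_lasso_sol_def by blast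
  then show False using z x unfolding zres_def by (simp add: Xmj_zero)
qed

text \<open>If the solution is nonzero, some constraint of the dual polytope is active: the
  termwise inequalities behind the fit identity must all be equalities.\<close>
lemma active_constraint:
  fixes X :: "real^'p::finite^'n"
  assumes sol: "is_lasso_sol X j lam b" and lam: "lam \<ge> 0" and b: "b \<noteq> (\<lambda>_. 0)"
  shows "\<exists>k. k \<noteq> j \<and> \<bar>column k X \<bullet> residual X j b\<bar> = real CARD('n) * lam"
proof -
  define m where "m = real CARD('n) * lam"
  define c where "c k = column k X \<bullet> residual X j b" for k
  have bound: "\<bar>c k\<bar> \<le> m" if "k \<noteq> j" for k
    using lasso_correlation_bound[OF sol lam that] unfolding c_def m_def .
  have slack: "b k * c k \<le> \<bar>b k\<bar> * m" if "k \<noteq> j" for k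
    using bound[OF that] abs_ge_self[of "b k * c k"] mult_left_mono[OF bound[OF that] abs_ge_zero[of "b k"]]
    by (simp add: abs_mult)
  have "(\<Sum>k\<in>-{j}. \<bar>b k\<bar> * m - b k * c k) = 0"
    using lasso_fit_identity[OF sol] unfolding Xmj_inner l1mj_def c_def m_def
    by (simp add: sum_subtractf sum_distrib_left sum_distrib_right algebra_simps)
  then have tight: "b k * c k = \<bar>b k\<bar> * m" if "k \<noteq> j" for k
    using slack that by (subst (asm) sum_nonneg_eq_0_iff) force+
  obtain k where bk: "b k \<noteq> 0" using b by auto
  then have kj: "k \<noteq> j" using sol unfolding is_lasso_sol_def by auto
  have "\<bar>b k\<bar> * m \<le> \<bar>b k\<bar> * \<bar>c k\<bar>" using tight[OF kj] by (metis abs_ge_self abs_mult)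
  then have "m \<le> \<bar>c k\<bar>" using bk by simp
  then show ?thesis using bound[OF kj] kj unfolding c_def m_def by force
qed

lemma eta_le_dual_level:
  fixes X :: "real^'p::finite^'n"
  assumes lam: "lam > 0"
  shows "eta X j lam \<le> real CARD('n) * lam / norm (zres X j lam)"
  unfolding eta_def
proof (rule Max.boundedI)
  fix a assume "a \<in> insert 0 ((\<lambda>k. \<bar>column k X \<bullet> zres X j lam\<bar> / norm (zres X j lam)) ` (-{j}))"
  then consider "a = 0" | k where "k \<noteq> j" "a = \<bar>column k X \<bullet> zres X j lam\<bar> / norm (zres X j lam)"
    by auto
  then show "a \<le> real CARD('n) * lam / norm (zres X j lam)"
  proof cases
    case (2 k)
    then show ?thesis
      using lasso_correlation_bound[OF gamma_hat_is_lasso_sol[OF lam, of X j]] lam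
      unfolding zres_eq_residual by (simp add: divide_right_mono)
  qed (use lam in simp)
qed auto

lemma eta_eq_dual_level:
  fixes X :: "real^'p::finite^'n"
  assumes lam: "lam > 0" and active: "gamma_hat X j lam \<noteq> (\<lambda>_. 0)"
  shows "eta X j lam = real CARD('n) * lam / norm (zres X j lam)"
proof -
  obtain k where k: "k \<noteq> j" "\<bar>column k X \<bullet> zres X j lam\<bar> = real CARD('n) * lam"
    using active_constraint[OF gamma_hat_is_lasso_sol[OF lam] _ active] lam
    unfolding zres_eq_residual by auto
  then have "real CARD('n) * lam / norm (zres X j lam)
      \<in> (\<lambda>k. \<bar>column k X \<bullet> zres X j lam\<bar> / norm (zres X j lam)) ` (-{j})"
    by (intro rev_image_eqI[of k]) auto
  then have "real CARD('n) * lam / norm (zres X j lam) \<le> eta X j lam"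
    unfolding eta_def by (intro Max_ge) auto
  then show ?thesis using eta_le_dual_level[OF lam, of X j] by linarith
qed

definition self_correlation :: "real^'p^'n \<Rightarrow> 'p \<Rightarrow> real" where
  "self_correlation X j =
     Max (insert 0 ((\<lambda>k. \<bar>column k X \<bullet> column j X\<bar> / norm (column j X)) ` (-{j})))"

lemma eta_null:
  assumes "gamma_hat X j lam = (\<lambda>_. 0)"
  shows "eta X j lam = self_correlation X j"
  using assms unfolding eta_def self_correlation_def zres_def by (simp add: Xmj_zero)

lemma column_in_dual_set_iff:
  fixes X :: "real^'p::finite^'n"
  assumes lam: "lam > 0" and x: "column j X \<noteq> 0"
  shows "column j X \<in> dual_set X j lam
    \<longleftrightarrow> self_correlation X j \<le> real CARD('n) * lam / norm (column j X)"
proof -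
  have "\<bar>column k X \<bullet> column j X\<bar> / norm (column j X) \<le> real CARD('n) * lam / norm (column j X)
      \<longleftrightarrow> \<bar>column k X \<bullet> column j X\<bar> \<le> real CARD('n) * lam" for k
    using x by (simp add: divide_le_cancel)
  moreover have "0 \<le> real CARD('n) * lam / norm (column j X)" using lam by simp
  ultimately show ?thesis unfolding dual_set_def self_correlation_def by (simp add: Max_le_iff) blast
qed

lemma dual_level_mono:
  fixes X :: "real^'p::finite^'n"
  assumes l: "0 < l1" "l1 < l2"
    and p1: "is_proj (dual_set X j l1) x z1" and p2: "is_proj (dual_set X j l2) x z2"
    and z: "z1 \<noteq> 0" "z2 \<noteq> 0"
  shows "real CARD('n) * l1 / norm z1 \<le> real CARD('n) * l2 / norm z2"
proof -
  have "dual_set X j l = (*\<^sub>R) l ` dual_set X j 1" if "l > 0" for l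
    using dual_set_dilation[OF that, of X j 1] by simp
  then have "l1 * norm z2 \<le> l2 * norm z1"
    using is_proj_dilation_norm_mono[of l1 _ x z1 l2 z2] p1 p2 l by (metis order.strict_trans)
  then show ?thesis using z by (simp add: field_simps mult_left_mono)
qed

text \<open>Monotonicity of \<open>eta\<close>: it equals the (monotone) dual level while the solution is
  nonzero, and the constant \<open>self_correlation\<close> from the level where \<open>x\<^sub>j\<close> becomes feasible on.\<close>
lemma eta_mono:
  fixes X :: "real^'p::finite^'n"
  assumes x: "column j X \<noteq> 0" and l: "0 < l1" "l1 < l2"
  shows "eta X j l1 \<le> eta X j l2"
proof -
  define n where "n = real CARD('n)"
  have l2: "0 < l2" using l by simp
  have z1: "zres X j l1 \<noteq> 0" and z2: "zres X j l2 \<noteq> 0"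
    using zres_nonzero[OF _ x] l2 l by auto
  have dual1: "eta X j l1 \<le> n * l1 / norm (zres X j l1)"
    unfolding n_def by (rule eta_le_dual_level[OF l(1)])
  show ?thesis
  proof (cases "gamma_hat X j l2 = (\<lambda>_. 0)")
    case False
    have "n * l1 / norm (zres X j l1) \<le> n * l2 / norm (zres X j l2)"
      unfolding n_def using dual_level_mono[OF l zres_is_proj[OF l(1)] zres_is_proj[OF l2] z1 z2] .
    then show ?thesis using dual1 eta_eq_dual_level[OF l2 False] unfolding n_def by linarith
  next
    case True
    note eta2 = eta_null[OF True]
    show ?thesis
    proof (cases "gamma_hat X j l1 = (\<lambda>_. 0)")
      case True
      then show ?thesis using eta2 eta_null[OF True] by simp
    next
      case False
      \<comment> \<open>the penalty level from which on \<open>x\<^sub>j\<close> itself is dual feasible\<close>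
      define l0 where "l0 = self_correlation X j * norm (column j X) / n"
      have n: "n > 0" unfolding n_def by simp
      have level0: "self_correlation X j = n * l0 / norm (column j X)"
        unfolding l0_def using n x by simp
      have "\<not> self_correlation X j \<le> n * l1 / norm (column j X)"
        using False gamma_hat_zero_iff[OF l(1)] column_in_dual_set_iff[OF l(1) x] unfolding n_def by blast
      then have l10: "l1 < l0" using n x unfolding level0 by (simp add: divide_le_cancel)
      then have x0: "column j X \<in> dual_set X j l0"
        using column_in_dual_set_iff[OF _ x, of l0] l(1) level0 unfolding n_def by simp
      have "n * l1 / norm (zres X j l1) \<le> n * l0 / norm (column j X)"
        unfolding n_def using dual_level_mono[OF l(1) l10 zres_is_proj[OF l(1)] is_proj_self[OF x0] z1 x] .
      then show ?thesis using dual1 eta2 level0 by linarith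
    qed
  qed
qed

text \<open>\<open>x\<^sub>j\<^sup>T z = \<parallel>z\<parallel>\<^sup>2 + n lam \<parallel>gamma\<parallel>\<^sub>1 \<ge> \<parallel>z\<parallel>\<^sup>2\<close>, which bounds \<open>tau\<close>.\<close>
lemma tau_le_inverse_norm:
  fixes X :: "real^'p::finite^'n"
  assumes lam: "lam > 0" and x: "column j X \<noteq> 0"
  shows "tau X j lam \<le> 1 / norm (zres X j lam)"
proof -
  define z where "z = zres X j lam"
  define g where "g = gamma_hat X j lam"
  have "Xmj X j g \<bullet> z = real CARD('n) * lam * l1mj j g"
    using lasso_fit_identity[OF gamma_hat_is_lasso_sol[OF lam]]
    unfolding z_def g_def zres_eq_residual .
  then have "Xmj X j g \<bullet> z \<ge> 0" using lam by (simp add: l1mj_nonneg)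
  moreover have "column j X = z + Xmj X j g" unfolding z_def g_def zres_def by simp
  ultimately have ge: "column j X \<bullet> z \<ge> (norm z)\<^sup>2"
    by (simp add: inner_add_left power2_norm_eq_inner)
  have pos: "(norm z)\<^sup>2 > 0" using zres_nonzero[OF lam x] unfolding z_def by simp
  then have xz: "\<bar>column j X \<bullet> z\<bar> > 0" using ge by linarith
  have "tau X j lam \<le> norm z / (norm z)\<^sup>2"
    unfolding tau_def z_def[symmetric] by (rule divide_left_mono) (use ge pos xz in auto)
  also have "\<dots> = 1 / norm z" by (simp add: power2_eq_square)
  finally show ?thesis unfolding z_def .
qed

text \<open>The residual norm is nondecreasing in \<open>lam\<close> (exchange argument).\<close>
lemma zres_norm_mono:
  fixes X :: "real^'p::finite^'n"
  assumes l: "0 < l1" "l1 < l2"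
  shows "norm (zres X j l1) \<le> norm (zres X j l2)"
proof -
  define g1 where "g1 = gamma_hat X j l1"
  define g2 where "g2 = gamma_hat X j l2"
  define fit where "fit b = (norm (residual X j b))\<^sup>2 / (2 * real CARD('n))" for b
  have s1: "is_lasso_sol X j l1 g1" and s2: "is_lasso_sol X j l2 g2"
    unfolding g1_def g2_def using gamma_hat_is_lasso_sol[of l1 X j] gamma_hat_is_lasso_sol[of l2 X j] l by auto
  have "fit g1 + l1 * l1mj j g1 \<le> fit g2 + l1 * l1mj j g2"
    and "fit g2 + l2 * l1mj j g2 \<le> fit g1 + l2 * l1mj j g1"
    using s1 s2 unfolding is_lasso_sol_def fit_def lasso_obj_residual by auto
  then have "fit g1 \<le> fit g2" by (rule penalty_exchange) (use l in auto)
  then have "(norm (zres X j l1))\<^sup>2 \<le> (norm (zres X j l2))\<^sup>2"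
    unfolding fit_def g1_def g2_def zres_eq_residual by (simp add: divide_le_cancel)
  then show ?thesis by (simp add: power_mono_iff)
qed

text \<open>The scaled Lasso in terms of the square-root Lasso: the noise level of \<open>b\<close> and the
  objective obtained by profiling out \<open>sigma\<close>.\<close>
definition noise_level :: "real^'p^'n \<Rightarrow> 'p \<Rightarrow> ('p \<Rightarrow> real) \<Rightarrow> real" where
  "noise_level X j b = norm (residual X j b) / sqrt (real CARD('n))"

definition sqrt_lasso_obj :: "real^'p^'n \<Rightarrow> 'p \<Rightarrow> real \<Rightarrow> ('p \<Rightarrow> real) \<Rightarrow> real" where
  "sqrt_lasso_obj X j lam b = noise_level X j b + lam * l1mj j b"

lemma scaled_obj_profile:
  fixes X :: "real^'p::finite^'n"
  assumes feas: "scaled_feasible X j b \<sigma>"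
  shows "scaled_obj X j lam b \<sigma> = sqrt_lasso_obj X j lam b + (\<sigma> - noise_level X j b)\<^sup>2 / (2 * \<sigma>)"
proof (cases "\<sigma> > 0")
  case True
  have "(norm (residual X j b))\<^sup>2 = real CARD('n) * (noise_level X j b)\<^sup>2"
    unfolding noise_level_def by (simp add: power_divide)
  then have "(norm (residual X j b))\<^sup>2 / (2 * real CARD('n) * \<sigma>) = (noise_level X j b)\<^sup>2 / (2 * \<sigma>)"
    by simp
  then show ?thesis using am_gm_gap[OF True, of "noise_level X j b"]
    unfolding scaled_obj_def sqrt_lasso_obj_def residual_def[symmetric] by simp
next
  case False
  then have "\<sigma> = 0" "residual X j b = 0"
    using feas unfolding scaled_feasible_def residual_def by auto
  then show ?thesis unfolding scaled_obj_def sqrt_lasso_obj_def noise_level_def residual_def by simp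
qed

lemma noise_level_feasible:
  fixes X :: "real^'p::finite^'n"
  assumes "b j = 0"
  shows "scaled_feasible X j b (noise_level X j b)"
  using assms unfolding scaled_feasible_def noise_level_def residual_def by auto

lemma scaled_obj_at_noise_level:
  fixes X :: "real^'p::finite^'n"
  assumes "b j = 0"
  shows "scaled_obj X j lam b (noise_level X j b) = sqrt_lasso_obj X j lam b"
  using scaled_obj_profile[OF noise_level_feasible[where b = b and j = j, OF assms]] by simp

lemma scaled_obj_ge_sqrt_lasso_obj:
  fixes X :: "real^'p::finite^'n"
  assumes "scaled_feasible X j b \<sigma>"
  shows "sqrt_lasso_obj X j lam b \<le> scaled_obj X j lam b \<sigma>"
proof -
  have "\<sigma> \<ge> 0" using assms unfolding scaled_feasible_def by auto
  then show ?thesis using scaled_obj_profile[OF assms, of lam] by simp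
qed

lemma scaled_sol_char:
  fixes X :: "real^'p::finite^'n"
  assumes sol: "is_scaled_sol X j lam b \<sigma>"
  shows "\<sigma> = noise_level X j b" and "b j = 0"
    and "\<And>b'. b' j = 0 \<Longrightarrow> sqrt_lasso_obj X j lam b \<le> sqrt_lasso_obj X j lam b'"
proof -
  have feas: "scaled_feasible X j b \<sigma>" using sol unfolding is_scaled_sol_def by blast
  then show bj: "b j = 0" unfolding scaled_feasible_def by simp
  have "scaled_obj X j lam b \<sigma> \<le> sqrt_lasso_obj X j lam b"
    using sol noise_level_feasible[where b = b and j = j, OF bj]
      scaled_obj_at_noise_level[where b = b and j = j, OF bj]
    unfolding is_scaled_sol_def by metis
  then have gap: "(\<sigma> - noise_level X j b)\<^sup>2 / (2 * \<sigma>) \<le> 0"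
    unfolding scaled_obj_profile[OF feas] by simp
  show "\<sigma> = noise_level X j b"
  proof (cases "\<sigma> > 0")
    case True
    then show ?thesis using gap by (simp add: divide_le_0_iff)
  next
    case False
    then show ?thesis using feas unfolding scaled_feasible_def noise_level_def residual_def by auto
  qed
  fix b' :: "'p \<Rightarrow> real" assume b': "b' j = 0"
  have "sqrt_lasso_obj X j lam b \<le> scaled_obj X j lam b \<sigma>"
    by (rule scaled_obj_ge_sqrt_lasso_obj[OF feas])
  also have "\<dots> \<le> scaled_obj X j lam b' (noise_level X j b')"
    using sol noise_level_feasible[where b = b' and j = j, OF b'] unfolding is_scaled_sol_def by blast
  also have "\<dots> = sqrt_lasso_obj X j lam b'" by (rule scaled_obj_at_noise_level[where b = b' and j = j, OF b'])
  finally show "sqrt_lasso_obj X j lam b \<le> sqrt_lasso_obj X j lam b'" .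
qed

lemma scaled_sol_exists:
  fixes X :: "real^'p::finite^'n"
  assumes lam: "lam > 0"
  shows "\<exists>b \<sigma>. is_scaled_sol X j lam b \<sigma>"
proof -
  have "continuous_on UNIV (\<lambda>v::real^'p. sqrt_lasso_obj X j lam (($) v))"
    unfolding sqrt_lasso_obj_def noise_level_def residual_def Xmj_def l1mj_def
    by (intro continuous_intros) auto
  moreover have "lam * l1mj j b \<le> sqrt_lasso_obj X j lam b" for b
    unfolding sqrt_lasso_obj_def noise_level_def by simp
  ultimately obtain b where b: "b j = 0" "\<forall>b'. b' j = 0 \<longrightarrow> sqrt_lasso_obj X j lam b \<le> sqrt_lasso_obj X j lam b'"
    using exists_penalized_minimizer[OF _ lam] by blast
  have "is_scaled_sol X j lam b (noise_level X j b)"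
    unfolding is_scaled_sol_def
  proof (intro conjI allI impI)
    show "scaled_feasible X j b (noise_level X j b)" by (rule noise_level_feasible[where b = b and j = j, OF b(1)])
    fix b' \<sigma>' assume feas: "scaled_feasible X j b' \<sigma>'"
    then have "b' j = 0" unfolding scaled_feasible_def by simp
    then have "sqrt_lasso_obj X j lam b \<le> sqrt_lasso_obj X j lam b'" using b(2) by blast
    also have "\<dots> \<le> scaled_obj X j lam b' \<sigma>'" by (rule scaled_obj_ge_sqrt_lasso_obj[OF feas])
    finally show "scaled_obj X j lam b (noise_level X j b) \<le> scaled_obj X j lam b' \<sigma>'"
      unfolding scaled_obj_at_noise_level[where b = b and j = j, OF b(1)] .
  qed
  then show ?thesis by blast
qed

lemma sigma_hat_is_noise_level:
  fixes X :: "real^'p::finite^'n"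
  assumes lam: "lam > 0"
  obtains b where "b j = 0" "sigma_hat X j lam = noise_level X j b"
    "\<And>b'. b' j = 0 \<Longrightarrow> sqrt_lasso_obj X j lam b \<le> sqrt_lasso_obj X j lam b'"
proof -
  have "\<exists>q. is_scaled_sol X j lam (fst q) (snd q)" using scaled_sol_exists[OF lam] by auto
  then have "is_scaled_sol X j lam (fst (SOME q. is_scaled_sol X j lam (fst q) (snd q)))
      (sigma_hat X j lam)"
    unfolding sigma_hat_def by (rule someI_ex)
  then show ?thesis using that scaled_sol_char by blast
qed

text \<open>The scaled Lasso noise estimate is nondecreasing (exchange argument for the
  square-root Lasso).\<close>
lemma sigma_hat_mono:
  fixes X :: "real^'p::finite^'n"
  assumes l: "0 < l1" "l1 < l2"
  shows "sigma_hat X j l1 \<le> sigma_hat X j l2"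
proof -
  obtain b1 where b1: "b1 j = 0" "sigma_hat X j l1 = noise_level X j b1"
    "\<And>b'. b' j = 0 \<Longrightarrow> sqrt_lasso_obj X j l1 b1 \<le> sqrt_lasso_obj X j l1 b'"
    using sigma_hat_is_noise_level[OF l(1)] by blast
  obtain b2 where b2: "b2 j = 0" "sigma_hat X j l2 = noise_level X j b2"
    "\<And>b'. b' j = 0 \<Longrightarrow> sqrt_lasso_obj X j l2 b2 \<le> sqrt_lasso_obj X j l2 b'"
    using sigma_hat_is_noise_level[where lam = l2 and X = X and j = j] l by auto
  have "noise_level X j b1 \<le> noise_level X j b2"
    using b1(3)[of b2, OF b2(1)] b2(3)[of b1, OF b1(1)] unfolding sqrt_lasso_obj_def
    by (rule penalty_exchange) (use l in auto)
  then show ?thesis using b1(2) b2(2) by simp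
qed

lemma mono_on_positive_reals:
  fixes f :: "real \<Rightarrow> real"
  assumes "\<And>a b. 0 < a \<Longrightarrow> a < b \<Longrightarrow> f a \<le> f b"
  shows "mono_on {0<..} f"
  by (rule mono_onI) (use assms in \<open>fastforce simp: order_le_less\<close>)

theorem proposition1:
  fixes X :: "real^'p^'n" and j :: 'p
  assumes "\<forall>k. (norm (column k X))^2 = real CARD('n)"
  shows "mono_on {0<..} (\<lambda>lam. norm (zres X j lam))
    \<and> mono_on {0<..} (eta X j)
    \<and> mono_on {0<..} (sigma_hat X j)
    \<and> (\<forall>lam>0. tau X j lam \<le> 1 / norm (zres X j lam))
    \<and> (\<forall>lam>0. gamma_hat X j lam \<noteq> (\<lambda>_. 0) \<longrightarrow> eta X j lam = lam * real CARD('n) / norm (zres X j lam))"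
proof (intro conjI allI impI)
  have "(norm (column j X))\<^sup>2 > 0" using assms by simp
  then have x: "column j X \<noteq> 0" by auto
  show "mono_on {0<..} (\<lambda>lam. norm (zres X j lam))"
    by (rule mono_on_positive_reals) (rule zres_norm_mono)
  show "mono_on {0<..} (eta X j)"
    by (rule mono_on_positive_reals) (rule eta_mono[OF x])
  show "mono_on {0<..} (sigma_hat X j)"
    by (rule mono_on_positive_reals) (rule sigma_hat_mono)
  fix lam :: real assume lam: "lam > 0"
  show "tau X j lam \<le> 1 / norm (zres X j lam)" by (rule tau_le_inverse_norm[OF lam x])
  assume "gamma_hat X j lam \<noteq> (\<lambda>_. 0)"
  then show "eta X j lam = lam * real CARD('n) / norm (zres X j lam)"
    using eta_eq_dual_level[OF lam] by (simp add: mult.commute)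
qed

end
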